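(* Let $\delta\ge1$, let $d_X\ge d_Y$ be sufficiently large integers, let $\Sigma=X\sqcup Y$ be a $\delta$-approximately $(d_X,d_Y)$-biregular bipartite graph, and let $a,g\in\mathbb N$ with $t:=g-a>0$ and $w:=gd_Y-ad_X$. For any sufficiently large absolute constant $\gamma$ the following holds. Fix $1\le\varphi\le d_Y/\delta-1$ and fix $F'\subseteq Y$; let $\mathcal G(a,g,F')$ be the set of $A\in\mathcal G(a,g)$ for which $F'$ is a $\varphi$-approximation. Let $\kappa=\max\{i: 2^i\le\sqrt{d_X}\}$. Then there exists a family $\mathcal F=\mathcal F(a,g,F')\subseteq 2^Y\times 2^X$ such that: (1) $\mathcal F=\bigcup_{i\in[0,\kappa]}\mathcal F_i$ where for each $i\in[0,\kappa]$, \[|\mathcal F_i|\le\binom{d_Yg}{\le\frac{\delta\gamma w}{(d_Y-\delta\varphi)d_X}}\binom{\delta^2d_X^2d_Y^2g}{\le\frac{2\gamma w}{d_Xd_Y}}\exp\left[O\left(\frac{it\gamma\log(gd_X^2/t)}{d_X}\right)\right],\] where the implicit constant in $O(\cdot)$ does not depend on $i$, $a$, $g$, $F'$; (2) if $(F,S)\in\mathcal F_i$, then $(F,S)$ is a $(d_X/(2^i\gamma),d_Y/\gamma)$-approximating pair for some $A\in\mathcal G(a,g,F')$; moreover, for $i\in[0,\kappa-1]$, every $(F,S)\in\mathcal F_i$ satisfies $|F|<g-t/2^i$; (3) every $A\in\mathcal G(a,g,F')$ has a $(d_X/(2^i\gamma),d_Y/\gamma)$-approximating pair in $\mathcal F_i$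 for some $i\in[0,\kappa]$.
   Context: A bipartite graph $\Sigma$ with parts $X,Y$ is $\delta$-approximately $(d_X,d_Y)$-biregular ($d_Y\le d_X$) if every $v\in X$ has degree $d(v)\in[d_X,\delta d_X]$ and every $v\in Y$ has degree $d(v)\in[\delta^{-1}d_Y,d_Y]$. $N(S)$ denotes the set of neighbours of $S$; $d_B(x)=|N(x)\cap B|$. For $A\subseteq X$, $[A]=\{x\in X:N(x)\subseteq N(A)\}$. A set is 2-linked if it induces a connected subgraph of $\Sigma^2$ (vertices adjacent iff at distance at most 2 in $\Sigma$). $\mathcal G(a,g)=\{A\subseteq X\text{ 2-linked}:|[A]|=a,|N(A)|=g\}$. For $A\subseteq X$, $N(A)^\varphi=\{y\in N(A):d_{[A]}(y)>\varphi\}$; a $\varphi$-approximation for $A$ is $F\subseteq Y$ with $N(A)^\varphi\subseteq F\subseteq N(A)$ and $N(F)\supseteq[A]$. A $(\psi_X,\psi_Y)$-approximating pair for $A\subseteq X$ is $(F,S)\in 2^Y\times 2^X$ with $F\subseteq N(A)$, $S\supseteq[A]$, $d_F(u)\ge d(u)-\psi_X$ for all $u\in S$, and $d_{X\setminus S}(v)\ge d(v)-\psi_Y$ for all $v\in Y\setminus F$. $\binom{n}{\le k}=\sum_{i\le k}\binom ni$; $\log$ is natural logarithm. *)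

theory Defs
  imports Complex_Main
begin

definition bipartite :: "'v set \<Rightarrow> 'v set \<Rightarrow> ('v \<Rightarrow> 'v \<Rightarrow> bool) \<Rightarrow> bool" where
  "bipartite X Y adj \<longleftrightarrow> finite X \<and> finite Y \<and> X \<inter> Y = {} \<and>
     (\<forall>u v. adj u v \<longrightarrow> adj v u) \<and>
     (\<forall>u v. adj u v \<longrightarrow> (u \<in> X \<and> v \<in> Y) \<or> (u \<in> Y \<and> v \<in> X))"

definition nbhd :: "('v \<Rightarrow> 'v \<Rightarrow> bool) \<Rightarrow> 'v \<Rightarrow> 'v set" where
  "nbhd adj v = {u. adj v u}"

definition deg :: "('v \<Rightarrow> 'v \<Rightarrow> bool) \<Rightarrow> 'v \<Rightarrow> nat" where
  "deg adj v = card (nbhd adj v)"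

definition degin :: "('v \<Rightarrow> 'v \<Rightarrow> bool) \<Rightarrow> 'v set \<Rightarrow> 'v \<Rightarrow> nat" where
  "degin adj B x = card (nbhd adj x \<inter> B)"

definition NS :: "('v \<Rightarrow> 'v \<Rightarrow> bool) \<Rightarrow> 'v set \<Rightarrow> 'v set" where
  "NS adj S = (\<Union>v\<in>S. nbhd adj v)"

definition approx_biregular ::
  "'v set \<Rightarrow> 'v set \<Rightarrow> ('v \<Rightarrow> 'v \<Rightarrow> bool) \<Rightarrow> real \<Rightarrow> nat \<Rightarrow> nat \<Rightarrow> bool" where
  "approx_biregular X Y adj \<delta> dX dY \<longleftrightarrow> bipartite X Y adj \<and> dY \<le> dX \<and>
     (\<forall>v\<in>X. real dX \<le> real (deg adj v) \<and> real (deg adj v) \<le> \<delta> * real dX) \<and>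
     (\<forall>v\<in>Y. real dY / \<delta> \<le> real (deg adj v) \<and> real (deg adj v) \<le> real dY)"

definition clos :: "'v set \<Rightarrow> ('v \<Rightarrow> 'v \<Rightarrow> bool) \<Rightarrow> 'v set \<Rightarrow> 'v set" where
  "clos X adj A = {x\<in>X. nbhd adj x \<subseteq> NS adj A}"

definition adj2 :: "('v \<Rightarrow> 'v \<Rightarrow> bool) \<Rightarrow> 'v \<Rightarrow> 'v \<Rightarrow> bool" where
  "adj2 adj u v \<longleftrightarrow> u \<noteq> v \<and> (adj u v \<or> (\<exists>w. adj u w \<and> adj w v))"

definition two_linked :: "('v \<Rightarrow> 'v \<Rightarrow> bool) \<Rightarrow> 'v set \<Rightarrow> bool" where
  "two_linked adj A \<longleftrightarrow>
     (\<forall>u\<in>A. \<forall>v\<in>A. (u, v) \<in> ({(x, y). x \<in> A \<and> y \<in> A \<and> adj2 adj x y})\<^sup>*)"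

definition Gset :: "'v set \<Rightarrow> ('v \<Rightarrow> 'v \<Rightarrow> bool) \<Rightarrow> nat \<Rightarrow> nat \<Rightarrow> 'v set set" where
  "Gset X adj a g = {A. A \<subseteq> X \<and> two_linked adj A \<and>
      card (clos X adj A) = a \<and> card (NS adj A) = g}"

definition Nphi :: "'v set \<Rightarrow> ('v \<Rightarrow> 'v \<Rightarrow> bool) \<Rightarrow> real \<Rightarrow> 'v set \<Rightarrow> 'v set" where
  "Nphi X adj \<phi> A = {y\<in>NS adj A. real (degin adj (clos X adj A) y) > \<phi>}"

definition phi_approx :: "'v set \<Rightarrow> ('v \<Rightarrow> 'v \<Rightarrow> bool) \<Rightarrow> real \<Rightarrow> 'v set \<Rightarrow> 'v set \<Rightarrow> bool" where
  "phi_approx X adj \<phi> F A \<longleftrightarrow>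
     Nphi X adj \<phi> A \<subseteq> F \<and> F \<subseteq> NS adj A \<and> clos X adj A \<subseteq> NS adj F"

definition GsetF :: "'v set \<Rightarrow> ('v \<Rightarrow> 'v \<Rightarrow> bool) \<Rightarrow> real \<Rightarrow> nat \<Rightarrow> nat \<Rightarrow> 'v set \<Rightarrow> 'v set set" where
  "GsetF X adj \<phi> a g F' = {A\<in>Gset X adj a g. phi_approx X adj \<phi> F' A}"

definition approx_pair ::
  "'v set \<Rightarrow> 'v set \<Rightarrow> ('v \<Rightarrow> 'v \<Rightarrow> bool) \<Rightarrow> real \<Rightarrow> real \<Rightarrow> 'v set \<Rightarrow> 'v set \<Rightarrow> 'v set \<Rightarrow> bool" where
  "approx_pair X Y adj \<psi>X \<psi>Y F S A \<longleftrightarrow>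
     F \<subseteq> NS adj A \<and> clos X adj A \<subseteq> S \<and>
     (\<forall>u\<in>S. real (degin adj F u) \<ge> real (deg adj u) - \<psi>X) \<and>
     (\<forall>v\<in>Y - F. real (degin adj (X - S) v) \<ge> real (deg adj v) - \<psi>Y)"

text \<open>binom(n, \<le> k) = sum over i \<le> k of (n choose i); generalized binomial
  coefficient since n may be a non-integer real.\<close>
definition binom_le :: "real \<Rightarrow> real \<Rightarrow> real" where
  "binom_le n k = (\<Sum>i\<in>{i::nat. real i \<le> k}. n gchoose i)"

definition kappa :: "nat \<Rightarrow> nat" where
  "kappa dX = (GREATEST i::nat. (2::real) ^ i \<le> sqrt (real dX))"

end

theory Submission
  imports Defs
begin

(*
  Every A in G(a, g, F') is encoded by a code (T0, W, T1, ..., Ti) of small vertex sets,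
  from which the approximating pair (F, S) is computed without knowing A.

  T0 is a subset of [A], chosen greedily so that F0 = F' \<union> N(T0) contains all but
  dX/\<gamma> neighbours of every vertex of [A]; S0 is the set of all x \<in> X with this property.
  W is a subset of Y - N(A), chosen greedily so that every y \<notin> N(A) has at most dY/\<gamma>
  neighbours in S1 = S0 - N(W); then F1 adds to F0 the vertices with more than dY/\<gamma>
  neighbours in S1, which all lie in N(A).  Each further Tj \<subseteq> [A] halves the allowed
  defect dX/(2^j \<gamma>) and is needed only while |F| \<ge> g - t/2^(j-1), so |Tj| \<le> 2\<gamma>t/dX.

  The number of edges between N(A) and X - [A] is at most w.  It bounds both
  |N(A) - F'| (whose vertices have at most \<phi> neighbours in [A]), and hence |T0|, and
  |S0 - [A]|, and hence |W|.  The i-th family is the image of the set of codes of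
  length i, whose size is the product of the three binomial-type counts.
*)

section \<open>Binomial estimates\<close>

lemma finite_nat_le_real: "finite {j::nat. real j \<le> k}"
proof (rule finite_subset)
  show "{j::nat. real j \<le> k} \<subseteq> {..nat \<lceil>k\<rceil>}"
    by (auto simp: nat_le_iff) linarith
qed simp

definition subsets_le :: "'a set \<Rightarrow> real \<Rightarrow> 'a set set" where
  "subsets_le U k = {T. T \<subseteq> U \<and> real (card T) \<le> k}"

lemma finite_subsets_le: "finite U \<Longrightarrow> finite (subsets_le U k)"
  by (simp add: subsets_le_def)

lemma card_subsets_le:
  assumes "finite U"
  shows "card (subsets_le U k) = (\<Sum>j | real j \<le> k. card U choose j)"
proof -
  have "subsets_le U k = (\<Union>j\<in>{j. real j \<le> k}. {T. T \<subseteq> U \<and> card T = j})"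
    by (auto simp: subsets_le_def)
  also have "card \<dots> = (\<Sum>j | real j \<le> k. card {T. T \<subseteq> U \<and> card T = j})"
    by (rule card_UN_disjoint[OF finite_nat_le_real]) (use assms in auto)
  finally show ?thesis by (simp add: n_subsets[OF assms])
qed

lemma binomial_le_gbinomial:
  fixes n :: real
  assumes "real m \<le> n" "real j \<le> n + 1"
  shows "real (m choose j) \<le> n gchoose j"
proof (cases "j \<le> m")
  case True
  then show ?thesis
    using gbinomial_mono[of j "real m" n] assms by (simp add: binomial_gbinomial)
next
  case False
  then have "m choose j = 0" by simp
  moreover have "0 \<le> n gchoose j"
    unfolding gbinomial_prod_rev using assms by (auto intro!: divide_nonneg_pos prod_nonneg)
  ultimately show ?thesis by (metis of_nat_0)
qed

(* Weight the j-th term by q^j / q^k with q = k/n and use (1 + q)^n \<le> e^(q n) = e^k. *)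
lemma sum_binomial_le_exp:
  fixes k :: real
  assumes k0: "0 < k" and kn: "k \<le> real n"
  shows "(\<Sum>j | real j \<le> k. real (n choose j)) \<le> exp (k * ln (exp 1 * real n / k))"
proof -
  define q where "q = k / real n"
  have n0: "real n > 0" using k0 kn by linarith
  have q0: "0 < q" "q \<le> 1" using k0 kn n0 by (auto simp: q_def field_simps)
  have "(\<Sum>j | real j \<le> k. real (n choose j))
      \<le> (\<Sum>j | real j \<le> k. real (n choose j) * q ^ j / q powr k)"
  proof (rule sum_mono)
    fix j assume "j \<in> {j. real j \<le> k}"
    then have "q powr k \<le> q ^ j"
      using powr_mono' q0 by (simp flip: powr_realpow)
    then have "1 \<le> q ^ j / q powr k" using q0 by simp
    then have "real (n choose j) * 1 \<le> real (n choose j) * (q ^ j / q powr k)"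
      by (intro mult_left_mono) auto
    then show "real (n choose j) \<le> real (n choose j) * q ^ j / q powr k" by simp
  qed
  also have "\<dots> \<le> (\<Sum>j\<le>n. real (n choose j) * q ^ j / q powr k)"
  proof -
    have "(\<Sum>j | real j \<le> k. real (n choose j) * q ^ j / q powr k)
        = (\<Sum>j\<in>{j. real j \<le> k} \<inter> {..n}. real (n choose j) * q ^ j / q powr k)"
      by (rule sum.mono_neutral_right) (auto simp: finite_nat_le_real)
    also have "\<dots> \<le> (\<Sum>j\<le>n. real (n choose j) * q ^ j / q powr k)"
      by (rule sum_mono2) (use q0 in auto)
    finally show ?thesis .
  qed
  also have "\<dots> = (q + 1) ^ n / q powr k"
    by (simp add: binomial_ring sum_divide_distrib)
  also have "\<dots> \<le> exp q ^ n / q powr k"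
    by (intro divide_right_mono power_mono) (use q0 in \<open>auto simp: add.commute\<close>)
  also have "\<dots> = exp (k - k * ln q)"
    using n0 q0 k0 by (simp add: q_def powr_def exp_diff flip: exp_of_nat_mult)
  also have "k - k * ln q = k * ln (exp 1 * real n / k)"
    using n0 k0 by (simp add: q_def ln_div ln_mult algebra_simps)
  finally show ?thesis .
qed

lemma binom_le_of_nat: "binom_le (real m) k = (\<Sum>j | real j \<le> k. real (m choose j))"
  by (simp add: binom_le_def binomial_gbinomial)

lemma binom_le_nonneg:
  assumes "0 \<le> n" "k \<le> n + 1"
  shows "0 \<le> binom_le n k"
  unfolding binom_le_def
proof (rule sum_nonneg)
  fix j assume "j \<in> {j. real j \<le> k}"
  then show "0 \<le> n gchoose j"
    using binomial_le_gbinomial[of 0 n j] assms by (simp add: order_trans[OF of_nat_0_le_iff])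
qed

lemma card_subsets_le_le_binom_le:
  assumes "finite U" "real (card U) \<le> n" "k \<le> n + 1"
  shows "real (card (subsets_le U k)) \<le> binom_le n k"
  unfolding card_subsets_le[OF assms(1)] binom_le_def of_nat_sum
  using assms(2,3) by (intro sum_mono binomial_le_gbinomial) auto

lemma card_subsets_le_le_binom_le_of_nat:
  assumes "finite U" "card U \<le> m"
  shows "real (card (subsets_le U k)) \<le> binom_le (real m) k"
  unfolding card_subsets_le[OF assms(1)] binom_le_of_nat of_nat_sum
  using assms(2) by (intro sum_mono) (simp add: binomial_right_mono)

lemma greedy_cover:
  fixes f :: "'a \<Rightarrow> 'b set" and \<tau> :: real
  assumes "finite Q" "0 \<le> \<tau>"
  shows "\<exists>T\<subseteq>I. finite T \<and>
    real (card T) * \<tau> \<le> real (card Q) - real (card (Q - \<Union>(f ` T))) \<and>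
    (\<forall>x\<in>I. real (card (f x \<inter> (Q - \<Union>(f ` T)))) \<le> \<tau>) \<and> (\<forall>x\<in>T. f x \<inter> Q \<noteq> {})"
  using assms(1)
proof (induction "card Q" arbitrary: Q rule: less_induct)
  case less
  show ?case
  proof (cases "\<forall>x\<in>I. real (card (f x \<inter> Q)) \<le> \<tau>")
    case True
    then show ?thesis by (intro exI[of _ "{}"]) auto
  next
    case False
    then obtain x where x: "x \<in> I" "\<tau> < real (card (f x \<inter> Q))" by auto
    with assms(2) have ne: "f x \<inter> Q \<noteq> {}" by auto
    define Q' where "Q' = Q - f x"
    have fin': "finite Q'" using less.prems by (simp add: Q'_def)
    have card_Q: "card Q = card Q' + card (f x \<inter> Q)"
      using card_Int_Diff[OF less.prems, of "f x"] by (simp add: Q'_def Int_commute)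
    with ne less.prems have "card Q' < card Q" by (simp add: card_gt_0_iff)
    then obtain T where T: "T \<subseteq> I" "finite T"
      "real (card T) * \<tau> \<le> real (card Q') - real (card (Q' - \<Union>(f ` T)))"
      "\<forall>x\<in>I. real (card (f x \<inter> (Q' - \<Union>(f ` T)))) \<le> \<tau>" "\<forall>x\<in>T. f x \<inter> Q' \<noteq> {}"
      using less.hyps[OF _ fin'] by blast
    have rest: "Q - \<Union>(f ` insert x T) = Q' - \<Union>(f ` T)" by (auto simp: Q'_def)
    have "real (card (insert x T)) * \<tau> \<le> (real (card T) + 1) * \<tau>"
      using T(2) assms(2) by (intro mult_right_mono) (auto simp: card_insert_if)
    also have "\<dots> \<le> real (card Q) - real (card (Q - \<Union>(f ` insert x T)))"
      using T(3) x(2) card_Q rest by (simp add: algebra_simps)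
    finally show ?thesis
      using T x ne rest Q'_def by (intro exI[of _ "insert x T"]) auto
  qed
qed

section \<open>Bipartite graphs\<close>

lemma card_NS_le:
  assumes "finite S" "\<forall>s\<in>S. real (deg adj s) \<le> D"
  shows "real (card (NS adj S)) \<le> real (card S) * D"
proof -
  have "card (NS adj S) \<le> (\<Sum>s\<in>S. deg adj s)"
    unfolding NS_def deg_def by (rule card_UN_le[OF assms(1)])
  then have "real (card (NS adj S)) \<le> (\<Sum>s\<in>S. real (deg adj s))"
    by (simp flip: of_nat_sum)
  also have "\<dots> \<le> (\<Sum>s\<in>S. D)" by (rule sum_mono) (use assms in auto)
  finally show ?thesis by simp
qed

lemma sum_degin_swap:
  assumes "finite P" "finite Q" "\<And>u v. adj u v \<Longrightarrow> adj v u"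
  shows "(\<Sum>x\<in>P. degin adj Q x) = (\<Sum>y\<in>Q. degin adj P y)"
proof -
  have "degin adj Q x = (\<Sum>y\<in>Q. if adj x y then 1 else 0)" for x
    using sum.inter_filter[OF assms(2), of "\<lambda>_. 1::nat" "adj x"]
    by (simp add: degin_def nbhd_def Collect_conj_eq Int_commute)
  moreover have "degin adj P y = (\<Sum>x\<in>P. if adj x y then 1 else 0)" for y
  proof -
    have "nbhd adj y \<inter> P = {x\<in>P. adj x y}" using assms(3) by (auto simp: nbhd_def)
    then show ?thesis
      using sum.inter_filter[OF assms(1), of "\<lambda>_. 1::nat" "\<lambda>x. adj x y"] by (simp add: degin_def)
  qed
  ultimately show ?thesis by (simp add: sum.swap[of _ P Q])
qed

lemma NS_mono: "S \<subseteq> T \<Longrightarrow> NS adj S \<subseteq> NS adj T"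
  by (auto simp: NS_def)

lemma NS_clos_subset: "NS adj (clos X adj A) \<subseteq> NS adj A"
  by (auto simp: NS_def clos_def)

locale bipartite_graph =
  fixes X Y :: "'v set" and adj :: "'v \<Rightarrow> 'v \<Rightarrow> bool"
  assumes bipartite: "bipartite X Y adj"
begin

lemma finite_X: "finite X" and finite_Y: "finite Y" and disjoint_XY: "X \<inter> Y = {}"
  and adj_sym: "adj u v \<Longrightarrow> adj v u"
  and adj_between: "adj u v \<Longrightarrow> (u \<in> X \<and> v \<in> Y) \<or> (u \<in> Y \<and> v \<in> X)"
  using bipartite by (auto simp: bipartite_def)

lemma nbhd_subset_Y: "v \<in> X \<Longrightarrow> nbhd adj v \<subseteq> Y"
  and nbhd_subset_X: "v \<in> Y \<Longrightarrow> nbhd adj v \<subseteq> X"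
  using adj_between disjoint_XY by (auto simp: nbhd_def)

lemma finite_nbhd: "finite (nbhd adj v)"
proof (rule finite_subset)
  show "nbhd adj v \<subseteq> X \<union> Y" using adj_between by (auto simp: nbhd_def)
qed (simp add: finite_X finite_Y)

lemma finite_NS: "finite S \<Longrightarrow> finite (NS adj S)"
  by (simp add: NS_def finite_nbhd)

lemma NS_subset_Y: "S \<subseteq> X \<Longrightarrow> NS adj S \<subseteq> Y"
  using nbhd_subset_Y by (force simp: NS_def)

lemma NS_subset_X: "S \<subseteq> Y \<Longrightarrow> NS adj S \<subseteq> X"
  using nbhd_subset_X by (force simp: NS_def)

lemma degin_mono: "B \<subseteq> C \<Longrightarrow> degin adj B v \<le> degin adj C v"
  unfolding degin_def by (rule card_mono) (use finite_nbhd in auto)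

lemma deg_eq_degin_plus_card_Diff: "deg adj v = degin adj B v + card (nbhd adj v - B)"
  unfolding deg_def degin_def using card_Int_Diff[OF finite_nbhd] .

lemma deg_eq_degin_plus_degin_compl:
  assumes "v \<in> Y"
  shows "deg adj v = degin adj B v + degin adj (X - B) v"
proof -
  have "nbhd adj v - B = nbhd adj v \<inter> (X - B)" using nbhd_subset_X[OF assms] by auto
  then show ?thesis by (simp add: deg_eq_degin_plus_card_Diff[of v B] degin_def)
qed

lemma sum_degin_compl_clos:
  assumes "A \<subseteq> X"
  shows "(\<Sum>u\<in>X - clos X adj A. degin adj (NS adj A) u)
       = (\<Sum>y\<in>NS adj A. degin adj (X - clos X adj A) y)"
  using assms finite_X by (intro sum_degin_swap) (auto intro: finite_NS finite_subset adj_sym)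

(* Each greedily chosen vertex of [A] covers more than \<tau> new vertices of N(A) - F. *)
lemma clos_cover:
  assumes "A \<subseteq> X" "0 \<le> \<tau>"
  shows "\<exists>T\<subseteq>clos X adj A. real (card T) * \<tau> \<le> real (card (NS adj A - F)) \<and>
    (\<forall>x\<in>clos X adj A. real (deg adj x) - \<tau> \<le> real (degin adj (F \<union> NS adj T) x))"
proof -
  let ?Q = "NS adj A - F"
  have "finite ?Q" using assms(1) finite_X by (auto intro: finite_NS finite_subset)
  then obtain T where T: "T \<subseteq> clos X adj A"
      "real (card T) * \<tau> \<le> real (card ?Q) - real (card (?Q - NS adj T))"
      "\<forall>x\<in>clos X adj A. real (card (nbhd adj x \<inter> (?Q - NS adj T))) \<le> \<tau>"
    using greedy_cover[OF _ assms(2), of ?Q "clos X adj A" "nbhd adj"] by (auto simp: NS_def)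
  have "real (deg adj x) - \<tau> \<le> real (degin adj (F \<union> NS adj T) x)" if x: "x \<in> clos X adj A" for x
  proof -
    have "nbhd adj x - (F \<union> NS adj T) = nbhd adj x \<inter> (?Q - NS adj T)"
      using x by (auto simp: clos_def)
    then show ?thesis
      using T(3) x deg_eq_degin_plus_card_Diff[of x "F \<union> NS adj T"] by force
  qed
  with T show ?thesis by (intro exI[of _ T]) auto
qed

end

section \<open>The edges leaving the closure\<close>

locale container_setting =
  fixes X Y :: "'v set" and adj :: "'v \<Rightarrow> 'v \<Rightarrow> bool"
    and \<delta> \<gamma> \<phi> :: real and dX dY a g :: nat and F' :: "'v set"
  assumes biregular: "approx_biregular X Y adj \<delta> dX dY"
    and \<delta>_ge_1: "1 \<le> \<delta>" and \<gamma>_ge_2: "2 \<le> \<gamma>" and dY_ge: "2 * \<gamma> \<le> real dY"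
    and a_less_g: "a < g" and \<phi>_le: "\<phi> \<le> real dY / \<delta> - 1" and F'_subset_Y: "F' \<subseteq> Y"
begin

sublocale bipartite_graph X Y adj
  using biregular by unfold_locales (simp add: approx_biregular_def)

lemma dY_le_dX: "dY \<le> dX"
  using biregular by (simp add: approx_biregular_def)

lemma deg_X: "v \<in> X \<Longrightarrow> real dX \<le> real (deg adj v) \<and> real (deg adj v) \<le> \<delta> * real dX"
  and deg_Y: "v \<in> Y \<Longrightarrow> real dY / \<delta> \<le> real (deg adj v) \<and> real (deg adj v) \<le> real dY"
  using biregular by (auto simp: approx_biregular_def)

lemma \<gamma>_pos: "0 < \<gamma>" and dY_pos: "0 < real dY" and dX_pos: "0 < real dX"
  and dX_ge: "2 * \<gamma> \<le> real dX"
  using \<gamma>_ge_2 dY_ge dY_le_dX by linarith+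

lemma dY_minus_\<delta>\<phi>_pos: "0 < real dY - \<delta> * \<phi>"
proof -
  have "\<delta> * \<phi> \<le> \<delta> * (real dY / \<delta> - 1)" using \<phi>_le \<delta>_ge_1 by (simp add: mult_left_mono)
  also have "\<dots> = real dY - \<delta>" using \<delta>_ge_1 by (simp add: field_simps)
  finally show ?thesis using \<delta>_ge_1 by linarith
qed

definition "t = real g - real a"
definition "w = real g * real dY - real a * real dX"
definition "GF = GsetF X adj \<phi> a g F'"

lemma t_pos: "0 < t"
  using a_less_g by (simp add: t_def)

lemma GF_D:
  assumes "A \<in> GF"
  shows "A \<subseteq> X" "card (NS adj A) = g" "card (clos X adj A) = a" "phi_approx X adj \<phi> F' A"
  using assms by (auto simp: GF_def GsetF_def Gset_def)

lemma finite_NS_GF: "A \<in> GF \<Longrightarrow> finite (NS adj A)"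
  using GF_D(1) finite_X finite_NS finite_subset by blast

lemma F'_subset_NS_GF: "A \<in> GF \<Longrightarrow> F' \<subseteq> NS adj A"
  and clos_subset_NS_F': "A \<in> GF \<Longrightarrow> clos X adj A \<subseteq> NS adj F'"
  using GF_D(4) by (auto simp: phi_approx_def)

lemma degin_clos_le_\<phi>:
  assumes "A \<in> GF" "y \<in> NS adj A - F'"
  shows "real (degin adj (clos X adj A) y) \<le> \<phi>"
  using GF_D(4)[OF assms(1)] assms(2) by (force simp: phi_approx_def Nphi_def)

definition "deficit A = (\<Sum>y\<in>NS adj A. degin adj (X - clos X adj A) y)"

lemma deficit_le_w:
  assumes "A \<in> GF"
  shows "real (deficit A) \<le> w"
proof -
  let ?G = "NS adj A" and ?H = "clos X adj A"
  have fin: "finite ?G" "finite ?H"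
    using finite_NS_GF[OF assms] finite_X by (auto simp: clos_def)
  have GY: "?G \<subseteq> Y" using NS_subset_Y[OF GF_D(1)[OF assms]] .
  have "(\<Sum>y\<in>?G. deg adj y) = (\<Sum>y\<in>?G. degin adj ?H y) + deficit A"
    unfolding deficit_def sum.distrib[symmetric]
    using GY by (intro sum.cong) (auto intro: deg_eq_degin_plus_degin_compl)
  moreover have "(\<Sum>y\<in>?G. degin adj ?H y) = (\<Sum>x\<in>?H. degin adj ?G x)"
    by (rule sum_degin_swap[OF fin adj_sym])
  moreover have "(\<Sum>x\<in>?H. degin adj ?G x) = (\<Sum>x\<in>?H. deg adj x)"
    by (intro sum.cong) (auto simp: clos_def degin_def deg_def Int_absorb2)
  moreover have "(\<Sum>y\<in>?G. real (deg adj y)) \<le> real g * real dY"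
    using sum_mono[of ?G "\<lambda>y. real (deg adj y)" "\<lambda>_. real dY"] GY deg_Y GF_D(2)[OF assms] by auto
  moreover have "real a * real dX \<le> (\<Sum>x\<in>?H. real (deg adj x))"
    using sum_mono[of ?H "\<lambda>_. real dX" "\<lambda>x. real (deg adj x)"] deg_X GF_D(3)[OF assms]
    by (auto simp: clos_def)
  ultimately show ?thesis
    unfolding w_def by (simp flip: of_nat_sum)
qed

lemma card_NS_Diff_F'_le:
  assumes "A \<in> GF"
  shows "real (card (NS adj A - F')) * (real dY - \<delta> * \<phi>) \<le> \<delta> * w"
proof -
  let ?G = "NS adj A" and ?H = "clos X adj A"
  have "real (card (?G - F')) * (real dY / \<delta> - \<phi>) = (\<Sum>y\<in>?G - F'. real dY / \<delta> - \<phi>)"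
    by simp
  also have "\<dots> \<le> (\<Sum>y\<in>?G - F'. real (degin adj (X - ?H) y))"
  proof (rule sum_mono)
    fix y assume y: "y \<in> ?G - F'"
    then have "y \<in> Y" using NS_subset_Y[OF GF_D(1)[OF assms]] by auto
    then show "real dY / \<delta> - \<phi> \<le> real (degin adj (X - ?H) y)"
      using deg_eq_degin_plus_degin_compl[of y ?H] deg_Y degin_clos_le_\<phi>[OF assms y] by force
  qed
  also have "\<dots> \<le> real (deficit A)"
    unfolding deficit_def of_nat_sum by (rule sum_mono2) (use finite_NS_GF[OF assms] in auto)
  also have "\<dots> \<le> w" using deficit_le_w[OF assms] .
  finally have le_w: "real (card (?G - F')) * (real dY / \<delta> - \<phi>) \<le> w" .
  have "real (card (?G - F')) * (real dY - \<delta> * \<phi>)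
      = \<delta> * (real (card (?G - F')) * (real dY / \<delta> - \<phi>))"
    using \<delta>_ge_1 by (simp add: field_simps)
  also have "\<dots> \<le> \<delta> * w" using le_w \<delta>_ge_1 by (intro mult_left_mono) auto
  finally show ?thesis .
qed

section \<open>Encoding sets by codes\<close>

definition "F0 T0 = F' \<union> NS adj T0"
definition "S0 T0 = {u\<in>X. real (deg adj u) - real dX / \<gamma> \<le> real (degin adj (F0 T0) u)}"
definition "S1 T0 W = S0 T0 - NS adj W"
definition "F1 T0 W = F0 T0 \<union> {y\<in>Y. real dY / \<gamma> < real (degin adj (S1 T0 W) y)}"
definition "F_code T0 W Ts = F1 T0 W \<union> NS adj (\<Union>(set Ts))"
definition "S_code T0 W Ts = {u\<in>S1 T0 W.
    real (deg adj u) - real dX / (2 ^ length Ts * \<gamma>) \<le> real (degin adj (F_code T0 W Ts) u)}"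
definition "pair_of c = (case c of (T0, W, Ts) \<Rightarrow> (F_code T0 W Ts, S_code T0 W Ts))"

definition "N1 = NS adj F'"
definition "N4 = NS adj (NS adj (NS adj N1))"
definition "size_T0 = \<delta> * \<gamma> * w / ((real dY - \<delta> * \<phi>) * real dX)"
definition "size_W = 2 * \<gamma> * w / (real dX * real dY)"
definition "size_T = 2 * \<gamma> * t / real dX"

definition "codes i = subsets_le N1 size_T0 \<times> subsets_le N4 size_W \<times>
    {Ts. set Ts \<subseteq> subsets_le N1 size_T \<and> length Ts = i}"

definition "good_code i A c \<longleftrightarrow> c \<in> codes i \<and> (case c of (T0, W, Ts) \<Rightarrow>
    F_code T0 W Ts \<subseteq> NS adj A \<and> clos X adj A \<subseteq> S1 T0 W \<and>
    (\<forall>x\<in>clos X adj A. real (deg adj x) - real dX / (2 ^ i * \<gamma>) \<le> real (degin adj (F_code T0 W Ts) x)))"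

lemma degin_compl_S_code:
  assumes "v \<in> Y - F_code T0 W Ts"
  shows "real (deg adj v) - real dY / \<gamma> \<le> real (degin adj (X - S_code T0 W Ts) v)"
proof -
  have "real (degin adj (S1 T0 W) v) \<le> real dY / \<gamma>"
    using assms by (auto simp: F_code_def F1_def)
  moreover have "degin adj (S_code T0 W Ts) v \<le> degin adj (S1 T0 W) v"
    by (rule degin_mono) (auto simp: S_code_def)
  ultimately show ?thesis
    using assms deg_eq_degin_plus_degin_compl[of v "S_code T0 W Ts"] by auto
qed

lemma good_code_approx_pair:
  assumes "good_code i A c"
  shows "approx_pair X Y adj (real dX / (2 ^ i * \<gamma>)) (real dY / \<gamma>) (fst (pair_of c)) (snd (pair_of c)) A"
proof -
  obtain T0 W Ts where c: "c = (T0, W, Ts)" by (cases c)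
  with assms have "length Ts = i" by (auto simp: good_code_def codes_def)
  with assms c show ?thesis
    using degin_compl_S_code[of _ T0 W Ts]
    by (auto simp: good_code_def approx_pair_def pair_of_def S_code_def)
qed

lemma exists_T0:
  assumes "A \<in> GF"
  obtains T0 where "T0 \<in> subsets_le N1 size_T0" "F0 T0 \<subseteq> NS adj A" "clos X adj A \<subseteq> S0 T0"
proof -
  let ?q = "real (card (NS adj A - F'))"
  obtain T0 where T0: "T0 \<subseteq> clos X adj A" "real (card T0) * (real dX / \<gamma>) \<le> ?q"
    "\<forall>x\<in>clos X adj A. real (deg adj x) - real dX / \<gamma> \<le> real (degin adj (F0 T0) x)"
    using clos_cover[OF GF_D(1)[OF assms], of "real dX / \<gamma>" F'] \<gamma>_pos
    by (auto simp: F0_def)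
  have "real (card T0) * real dX * (real dY - \<delta> * \<phi>) \<le> \<gamma> * ?q * (real dY - \<delta> * \<phi>)"
    using T0(2) \<gamma>_pos dY_minus_\<delta>\<phi>_pos by (intro mult_right_mono) (auto simp: field_simps)
  also have "\<dots> \<le> \<gamma> * (\<delta> * w)"
    using card_NS_Diff_F'_le[OF assms] \<gamma>_pos by (simp add: mult.assoc mult_left_mono)
  finally have "real (card T0) \<le> size_T0"
    using dY_minus_\<delta>\<phi>_pos dX_pos by (simp add: size_T0_def field_simps)
  moreover have "T0 \<subseteq> N1" using T0(1) clos_subset_NS_F'[OF assms] by (auto simp: N1_def)
  moreover have "F0 T0 \<subseteq> NS adj A"
    using F'_subset_NS_GF[OF assms] NS_mono[OF T0(1), of adj] NS_clos_subset[of adj X A]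
    by (auto simp: F0_def)
  moreover have "clos X adj A \<subseteq> S0 T0" using T0(3) by (auto simp: S0_def clos_def)
  ultimately show ?thesis by (intro that) (auto simp: subsets_le_def)
qed

lemma card_S0_Diff_clos_le:
  assumes "A \<in> GF" "F0 T0 \<subseteq> NS adj A"
  shows "real (card (S0 T0 - clos X adj A)) * real dX \<le> 2 * w"
proof -
  let ?R = "S0 T0 - clos X adj A"
  have "real dX - real dX / \<gamma> \<le> real (degin adj (NS adj A) u)" if "u \<in> ?R" for u
  proof -
    have "u \<in> X" "real (deg adj u) - real dX / \<gamma> \<le> real (degin adj (F0 T0) u)"
      using that by (auto simp: S0_def)
    moreover have "degin adj (F0 T0) u \<le> degin adj (NS adj A) u" by (rule degin_mono[OF assms(2)])
    ultimately show ?thesis using deg_X by force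
  qed
  then have "real (card ?R) * (real dX - real dX / \<gamma>) \<le> (\<Sum>u\<in>?R. real (degin adj (NS adj A) u))"
    using sum_mono[of ?R "\<lambda>_. real dX - real dX / \<gamma>"] by simp
  also have "\<dots> \<le> (\<Sum>u\<in>X - clos X adj A. real (degin adj (NS adj A) u))"
    by (rule sum_mono2) (use finite_X in \<open>auto simp: S0_def\<close>)
  also have "\<dots> = real (deficit A)"
    using sum_degin_compl_clos[OF GF_D(1)[OF assms(1)]] by (simp add: deficit_def flip: of_nat_sum)
  also have "\<dots> \<le> w" by (rule deficit_le_w[OF assms(1)])
  finally have "real (card ?R) * (real dX - real dX / \<gamma>) \<le> w" .
  moreover have "real dX / 2 \<le> real dX - real dX / \<gamma>"
    using \<gamma>_ge_2 dX_pos by (simp add: field_simps)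
  ultimately have "real (card ?R) * (real dX / 2) \<le> w"
    by (meson mult_left_mono of_nat_0_le_iff order_trans)
  then show ?thesis by simp
qed

lemma F'_subset_NS_N1: "F' \<subseteq> NS adj N1"
proof
  fix y assume y: "y \<in> F'"
  then have "0 < real dY / \<delta>" "real dY / \<delta> \<le> real (deg adj y)"
    using F'_subset_Y deg_Y dY_pos \<delta>_ge_1 by auto
  then obtain z where "adj y z" by (force simp: deg_def nbhd_def)
  with y show "y \<in> NS adj N1" by (auto simp: N1_def NS_def nbhd_def intro: adj_sym)
qed

lemma S0_subset_NS_NS_N1:
  assumes "T0 \<subseteq> N1"
  shows "S0 T0 \<subseteq> NS adj (NS adj N1)"
proof
  fix u assume u: "u \<in> S0 T0"
  have "real dX / \<gamma> < real dX" using \<gamma>_ge_2 dX_pos by (simp add: divide_less_eq)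
  then have "real dX / \<gamma> < real (deg adj u)"
    using deg_X u by (fastforce simp: S0_def)
  with u have "0 < degin adj (F0 T0) u" by (auto simp: S0_def)
  then obtain y where y: "y \<in> F0 T0" "adj u y" by (auto simp: degin_def nbhd_def card_gt_0_iff)
  have "F0 T0 \<subseteq> NS adj N1"
    using F'_subset_NS_N1 NS_mono[OF assms] by (auto simp: F0_def)
  with y(1) have "y \<in> NS adj N1" by blast
  moreover have "u \<in> nbhd adj y" using adj_sym[OF y(2)] by (simp add: nbhd_def)
  ultimately show "u \<in> NS adj (NS adj N1)" by (auto simp: NS_def)
qed

lemma W_subset_N4:
  assumes "T0 \<subseteq> N1" "\<forall>v\<in>W. nbhd adj v \<inter> S0 T0 \<noteq> {}"
  shows "W \<subseteq> N4"
proof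
  fix v assume "v \<in> W"
  with assms(2) obtain u where u: "u \<in> S0 T0" "adj v u" by (auto simp: nbhd_def)
  then have "u \<in> NS adj (NS adj N1)" using S0_subset_NS_NS_N1[OF assms(1)] by blast
  moreover have "v \<in> nbhd adj u" using adj_sym[OF u(2)] by (simp add: nbhd_def)
  ultimately show "v \<in> N4" by (auto simp: N4_def NS_def)
qed

lemma F1_subset_NS:
  assumes "F0 T0 \<subseteq> NS adj A"
    and few: "\<forall>v\<in>Y - NS adj A. real (card (nbhd adj v \<inter> (S0 T0 - clos X adj A - NS adj W))) \<le> real dY / \<gamma>"
  shows "F1 T0 W \<subseteq> NS adj A"
proof
  fix y assume y: "y \<in> F1 T0 W"
  show "y \<in> NS adj A"
  proof (rule ccontr)
    assume y_out: "y \<notin> NS adj A"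
    with y assms(1) have "y \<in> Y" "real dY / \<gamma> < real (degin adj (S1 T0 W) y)"
      by (auto simp: F1_def)
    moreover have "nbhd adj y \<inter> S1 T0 W \<subseteq> nbhd adj y \<inter> (S0 T0 - clos X adj A - NS adj W)"
      using y_out adj_sym by (auto simp: S1_def clos_def nbhd_def)
    then have "degin adj (S1 T0 W) y \<le> card (nbhd adj y \<inter> (S0 T0 - clos X adj A - NS adj W))"
      unfolding degin_def by (intro card_mono) (auto simp: finite_nbhd)
    ultimately show False using few y_out by force
  qed
qed

lemma exists_W:
  assumes A: "A \<in> GF" and T0: "T0 \<subseteq> N1" "F0 T0 \<subseteq> NS adj A" "clos X adj A \<subseteq> S0 T0"
  obtains W where "W \<in> subsets_le N4 size_W" "F1 T0 W \<subseteq> NS adj A" "clos X adj A \<subseteq> S1 T0 W"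
proof -
  let ?R = "S0 T0 - clos X adj A"
  have "finite ?R" using finite_X by (auto simp: S0_def)
  then obtain W where W: "W \<subseteq> Y - NS adj A"
      "real (card W) * (real dY / \<gamma>) \<le> real (card ?R)"
      "\<forall>v\<in>Y - NS adj A. real (card (nbhd adj v \<inter> (?R - NS adj W))) \<le> real dY / \<gamma>"
      "\<forall>v\<in>W. nbhd adj v \<inter> ?R \<noteq> {}"
    using greedy_cover[of ?R "real dY / \<gamma>" "Y - NS adj A" "nbhd adj"] \<gamma>_pos
    by (auto simp: NS_def)
  have "real (card W) * real dY * real dX \<le> \<gamma> * real (card ?R) * real dX"
    using W(2) \<gamma>_pos dX_pos by (intro mult_right_mono) (auto simp: field_simps)
  also have "\<dots> \<le> \<gamma> * (2 * w)"
    using card_S0_Diff_clos_le[OF A T0(2)] \<gamma>_pos by (simp add: mult.assoc mult_left_mono)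
  finally have "real (card W) \<le> size_W"
    using dX_pos dY_pos by (simp add: size_W_def field_simps)
  moreover have "W \<subseteq> N4" using W(4) by (intro W_subset_N4[OF T0(1)]) blast
  moreover have "clos X adj A \<subseteq> S1 T0 W"
    using T0(3) W(1) adj_sym by (fastforce simp: S1_def NS_def nbhd_def clos_def)
  moreover have "F1 T0 W \<subseteq> NS adj A" using W(3) by (intro F1_subset_NS[OF T0(2)]) blast
  ultimately show ?thesis by (intro that) (auto simp: subsets_le_def)
qed

lemma exists_good_code_0:
  assumes "A \<in> GF"
  shows "\<exists>c. good_code 0 A c"
proof -
  obtain T0 where T0: "T0 \<in> subsets_le N1 size_T0" "F0 T0 \<subseteq> NS adj A" "clos X adj A \<subseteq> S0 T0"
    using exists_T0[OF assms] .
  moreover have "T0 \<subseteq> N1" using T0(1) by (simp add: subsets_le_def)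
  ultimately obtain W where W: "W \<in> subsets_le N4 size_W" "F1 T0 W \<subseteq> NS adj A"
      "clos X adj A \<subseteq> S1 T0 W"
    using exists_W[OF assms] by blast
  have "real (deg adj x) - real dX / \<gamma> \<le> real (degin adj (F_code T0 W []) x)"
    if "x \<in> clos X adj A" for x
  proof -
    have "degin adj (F0 T0) x \<le> degin adj (F_code T0 W []) x"
      by (rule degin_mono) (auto simp: F_code_def F1_def)
    with that T0(3) show ?thesis by (force simp: S0_def)
  qed
  with T0 W show ?thesis
    by (intro exI[of _ "(T0, W, [])"]) (auto simp: good_code_def codes_def F_code_def NS_def)
qed

lemma exists_good_code_Suc:
  assumes A: "A \<in> GF" and c: "good_code i A c"
    and large: "real g - t / 2 ^ i \<le> real (card (fst (pair_of c)))"
  shows "\<exists>c'. good_code (Suc i) A c'"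
proof -
  obtain T0 W Ts where c_eq: "c = (T0, W, Ts)" by (cases c)
  let ?F = "F_code T0 W Ts" and ?\<tau> = "real dX / (2 ^ Suc i * \<gamma>)"
  have code: "(T0, W, Ts) \<in> codes i" and F_sub: "?F \<subseteq> NS adj A"
    and clos_sub: "clos X adj A \<subseteq> S1 T0 W"
    using c c_eq by (auto simp: good_code_def)
  obtain T where T: "T \<subseteq> clos X adj A" "real (card T) * ?\<tau> \<le> real (card (NS adj A - ?F))"
      "\<forall>x\<in>clos X adj A. real (deg adj x) - ?\<tau> \<le> real (degin adj (?F \<union> NS adj T) x)"
    using clos_cover[OF GF_D(1)[OF A], of ?\<tau> ?F] \<gamma>_pos by auto
  have "card (NS adj A - ?F) = g - card ?F"
    using card_Diff_subset[OF finite_subset[OF F_sub finite_NS_GF[OF A]] F_sub] GF_D(2)[OF A] by simp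
  moreover have "card ?F \<le> g"
    using card_mono[OF finite_NS_GF[OF A] F_sub] GF_D(2)[OF A] by simp
  ultimately have "real (card T) * ?\<tau> \<le> t / 2 ^ i"
    using T(2) large c_eq by (simp add: pair_of_def of_nat_diff)
  then have "real (card T) \<le> size_T"
    using \<gamma>_pos dX_pos by (simp add: size_T_def field_simps)
  moreover have "T \<subseteq> N1" using T(1) clos_subset_NS_F'[OF A] by (auto simp: N1_def)
  moreover have "F_code T0 W (T # Ts) = ?F \<union> NS adj T" by (auto simp: F_code_def NS_def)
  moreover have "NS adj T \<subseteq> NS adj A"
    using NS_mono[OF T(1), of adj] NS_clos_subset[of adj X A] by blast
  ultimately show ?thesis
    using code F_sub clos_sub T(3)
    by (intro exI[of _ "(T0, W, T # Ts)"]) (auto simp: good_code_def codes_def subsets_le_def)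
qed

definition "family i = {p \<in> pair_of ` codes i.
    (\<exists>A\<in>GF. approx_pair X Y adj (real dX / (2 ^ i * \<gamma>)) (real dY / \<gamma>) (fst p) (snd p) A) \<and>
    (i < kappa dX \<longrightarrow> real (card (fst p)) < real g - t / 2 ^ i)}"

lemma family_subset_Pow: "family i \<subseteq> Pow Y \<times> Pow X"
proof
  fix p assume p: "p \<in> family i"
  then obtain A where "A \<in> GF" "fst p \<subseteq> NS adj A" by (auto simp: family_def approx_pair_def)
  then have "fst p \<subseteq> Y" using NS_subset_Y[OF GF_D(1)] by blast
  moreover have "snd p \<subseteq> X" using p by (auto simp: family_def pair_of_def S_code_def S1_def S0_def)
  ultimately show "p \<in> Pow Y \<times> Pow X" by (cases p) auto
qed

lemma covered_or_good_code:
  assumes A: "A \<in> GF" and "i \<le> kappa dX"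
  shows "(\<exists>j<i. \<exists>p\<in>family j.
           approx_pair X Y adj (real dX / (2 ^ j * \<gamma>)) (real dY / \<gamma>) (fst p) (snd p) A)
         \<or> (\<exists>c. good_code i A c)"
  using assms(2)
proof (induction i)
  case 0
  then show ?case using exists_good_code_0[OF A] by blast
next
  case (Suc i)
  then consider "\<exists>j<i. \<exists>p\<in>family j.
           approx_pair X Y adj (real dX / (2 ^ j * \<gamma>)) (real dY / \<gamma>) (fst p) (snd p) A"
    | c where "good_code i A c" by fastforce
  then show ?case
  proof cases
    case 1
    then show ?thesis using less_SucI by blast
  next
    case (2 c)
    show ?thesis
    proof (cases "real (card (fst (pair_of c))) < real g - t / 2 ^ i")
      case True
      then have "pair_of c \<in> family i"
        using A good_code_approx_pair[OF 2] 2 by (auto simp: family_def good_code_def)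
      then show ?thesis using good_code_approx_pair[OF 2] by blast
    next
      case False
      then show ?thesis using exists_good_code_Suc[OF A 2] by force
    qed
  qed
qed

lemma family_covers:
  assumes A: "A \<in> GF"
  shows "\<exists>i\<le>kappa dX. \<exists>p\<in>family i.
           approx_pair X Y adj (real dX / (2 ^ i * \<gamma>)) (real dY / \<gamma>) (fst p) (snd p) A"
  using covered_or_good_code[OF A order_refl]
proof
  assume "\<exists>c. good_code (kappa dX) A c"
  then obtain c where c: "good_code (kappa dX) A c" ..
  then have "pair_of c \<in> family (kappa dX)"
    using A good_code_approx_pair[OF c] by (auto simp: family_def good_code_def)
  then show ?thesis using good_code_approx_pair[OF c] by blast
qed (meson less_imp_le)

section \<open>Counting codes\<close>

lemma finite_N1: "finite N1" and finite_N4: "finite N4"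
  using F'_subset_Y finite_Y by (auto simp: N1_def N4_def intro!: finite_NS elim: finite_subset)

lemma finite_codes: "finite (codes i)"
  unfolding codes_def
  by (intro finite_cartesian_product finite_subsets_le finite_lists_length_eq finite_N1 finite_N4)

lemma card_codes: "card (codes i) = card (subsets_le N1 size_T0) * card (subsets_le N4 size_W) *
    card (subsets_le N1 size_T) ^ i"
  using finite_N1 finite_N4
  by (simp add: codes_def card_cartesian_product card_lists_length_eq finite_subsets_le)

lemma card_family_le_card_codes: "card (family i) \<le> card (codes i)"
proof -
  have "card (family i) \<le> card (pair_of ` codes i)"
    using finite_codes by (intro card_mono) (auto simp: family_def)
  also have "\<dots> \<le> card (codes i)" by (rule card_image_le[OF finite_codes])
  finally show ?thesis .
qed

lemma size_W_le: "size_W \<le> \<delta>\<^sup>2 * (real dX)\<^sup>2 * (real dY)\<^sup>2 * real g"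
proof -
  have "2 * \<gamma> * w \<le> 2 * \<gamma> * (real g * real dY)"
    using \<gamma>_pos by (intro mult_left_mono) (auto simp: w_def)
  also have "\<dots> \<le> real dX * (real g * real dY)"
    using dX_ge by (intro mult_right_mono) auto
  finally have "size_W \<le> real g"
    using dX_pos dY_pos by (simp add: size_W_def field_simps)
  have "1 \<le> \<delta>\<^sup>2" "1 \<le> (real dX)\<^sup>2" "1 \<le> (real dY)\<^sup>2"
    using \<delta>_ge_1 dX_ge dY_ge \<gamma>_ge_2 by (simp_all add: one_le_power)
  then have "1 * 1 * 1 \<le> \<delta>\<^sup>2 * (real dX)\<^sup>2 * (real dY)\<^sup>2"
    by (intro mult_mono) auto
  then have "real g \<le> \<delta>\<^sup>2 * (real dX)\<^sup>2 * (real dY)\<^sup>2 * real g"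
    using mult_right_mono[of 1 _ "real g"] by simp
  with \<open>size_W \<le> real g\<close> show ?thesis by linarith
qed

lemma binom_le_factors_nonneg:
  "0 \<le> binom_le (real dY * real g) size_T0"
  "0 \<le> binom_le (\<delta>\<^sup>2 * (real dX)\<^sup>2 * (real dY)\<^sup>2 * real g) size_W"
  using binom_le_of_nat[of "dY * g" size_T0] size_W_le
  by (auto simp: sum_nonneg intro: binom_le_nonneg)

lemma size_T_pos: "0 < size_T"
  using t_pos \<gamma>_pos dX_pos by (simp add: size_T_def)

lemma size_T_le: "size_T \<le> real (dY * g)"
proof -
  have "size_T \<le> t"
    using t_pos dX_pos mult_right_mono[OF dX_ge, of t] by (simp add: size_T_def field_simps)
  also have "t \<le> real dY * real g"
    using mult_right_mono[of 1 "real dY" "real g"] dY_ge \<gamma>_ge_2 by (simp add: t_def)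
  finally show ?thesis by simp
qed

lemma e_dY_g_div_size_T_le: "exp 1 * real (dY * g) / size_T \<le> real g * (real dX)\<^sup>2 / t"
proof -
  have "exp 1 * real dY \<le> 3 * real dX"
    using exp_le dY_le_dX by (intro mult_mono) auto
  also have "\<dots> \<le> 2 * \<gamma> * real dX" using \<gamma>_ge_2 by (intro mult_right_mono) auto
  finally have e_dY: "exp 1 * real dY \<le> 2 * \<gamma> * real dX" .
  have "exp 1 * real (dY * g) / size_T = exp 1 * real dY * real g * real dX / (2 * \<gamma> * t)"
    using dX_pos by (simp add: size_T_def field_simps)
  also have "\<dots> \<le> 2 * \<gamma> * real dX * real g * real dX / (2 * \<gamma> * t)"
    using e_dY t_pos \<gamma>_pos by (intro divide_right_mono mult_right_mono) auto
  also have "\<dots> = real g * (real dX)\<^sup>2 / t"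
    using \<gamma>_pos by (simp add: power2_eq_square field_simps)
  finally show ?thesis .
qed

context
  assumes card_F'_le: "card F' \<le> g"
begin

lemma card_N1_le: "card N1 \<le> dY * g"
proof -
  have "real (card N1) \<le> real (card F') * real dY"
    unfolding N1_def using F'_subset_Y finite_Y deg_Y by (intro card_NS_le) (auto elim: finite_subset)
  also have "\<dots> \<le> real g * real dY" using card_F'_le by (intro mult_right_mono) auto
  finally show ?thesis by (simp add: mult.commute flip: of_nat_mult)
qed

lemma card_N4_le: "real (card N4) \<le> \<delta>\<^sup>2 * (real dX)\<^sup>2 * (real dY)\<^sup>2 * real g"
proof -
  have N1_X: "N1 \<subseteq> X" and N2_Y: "NS adj N1 \<subseteq> Y" and N3_X: "NS adj (NS adj N1) \<subseteq> X"
    using NS_subset_X[OF F'_subset_Y] NS_subset_Y NS_subset_X by (auto simp: N1_def)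
  have fin: "finite N1" "finite (NS adj N1)" "finite (NS adj (NS adj N1))"
    using finite_N1 by (auto intro: finite_NS)
  have "real (card N4) \<le> real (card (NS adj (NS adj N1))) * (\<delta> * real dX)"
    unfolding N4_def using fin N3_X deg_X by (intro card_NS_le) auto
  also have "\<dots> \<le> real (card (NS adj N1)) * real dY * (\<delta> * real dX)"
    using fin N2_Y deg_Y \<delta>_ge_1 by (intro mult_right_mono card_NS_le) auto
  also have "\<dots> \<le> real (card N1) * (\<delta> * real dX) * real dY * (\<delta> * real dX)"
    using fin N1_X deg_X \<delta>_ge_1 by (intro mult_right_mono card_NS_le) auto
  also have "\<dots> \<le> real (dY * g) * (\<delta> * real dX) * real dY * (\<delta> * real dX)"
    using of_nat_mono[OF card_N1_le, where 'a = real] \<delta>_ge_1 by (intro mult_right_mono) auto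
  finally show ?thesis by (simp add: power2_eq_square algebra_simps)
qed

lemma card_T0_choices_le: "real (card (subsets_le N1 size_T0)) \<le> binom_le (real dY * real g) size_T0"
  using card_subsets_le_le_binom_le_of_nat[OF finite_N1 card_N1_le] by simp

lemma card_W_choices_le:
  "real (card (subsets_le N4 size_W)) \<le> binom_le (\<delta>\<^sup>2 * (real dX)\<^sup>2 * (real dY)\<^sup>2 * real g) size_W"
  using size_W_le by (intro card_subsets_le_le_binom_le finite_N4 card_N4_le) auto

lemma card_T_choices_le:
  "real (card (subsets_le N1 size_T)) \<le> exp (size_T * ln (real g * (real dX)\<^sup>2 / t))"
proof -
  have "real (card (subsets_le N1 size_T)) \<le> binom_le (real (dY * g)) size_T"
    by (rule card_subsets_le_le_binom_le_of_nat[OF finite_N1 card_N1_le])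
  also have "\<dots> \<le> exp (size_T * ln (exp 1 * real (dY * g) / size_T))"
    unfolding binom_le_of_nat by (rule sum_binomial_le_exp[OF size_T_pos size_T_le])
  also have "\<dots> \<le> exp (size_T * ln (real g * (real dX)\<^sup>2 / t))"
  proof -
    have "0 < exp 1 * real (dY * g) / size_T" using size_T_pos size_T_le by simp
    with e_dY_g_div_size_T_le size_T_pos show ?thesis by simp
  qed
  finally show ?thesis .
qed

lemma card_family_le_of_card_F'_le:
  "real (card (family i)) \<le>
     binom_le (real dY * real g) size_T0
     * binom_le (\<delta>\<^sup>2 * (real dX)\<^sup>2 * (real dY)\<^sup>2 * real g) size_W
     * exp (2 * (real i * t * \<gamma> * ln (real g * (real dX)\<^sup>2 / t) / real dX))"
proof -
  let ?L = "ln (real g * (real dX)\<^sup>2 / t)"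
  have "real (card (family i)) \<le> real (card (codes i))"
    using card_family_le_card_codes by simp
  also have "\<dots> = real (card (subsets_le N1 size_T0)) * real (card (subsets_le N4 size_W))
      * real (card (subsets_le N1 size_T)) ^ i"
    by (simp add: card_codes)
  also have "\<dots> \<le> binom_le (real dY * real g) size_T0
      * binom_le (\<delta>\<^sup>2 * (real dX)\<^sup>2 * (real dY)\<^sup>2 * real g) size_W * exp (size_T * ?L) ^ i"
    using binom_le_factors_nonneg
    by (intro mult_mono power_mono card_T0_choices_le card_W_choices_le card_T_choices_le) auto
  also have "exp (size_T * ?L) ^ i = exp (2 * (real i * t * \<gamma> * ?L / real dX))"
    by (simp add: size_T_def flip: exp_of_nat_mult)
  finally show ?thesis .
qed

end

lemma card_family_bound:
  "real (card (family i)) \<le>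
     binom_le (real dY * real g) size_T0
     * binom_le (\<delta>\<^sup>2 * (real dX)\<^sup>2 * (real dY)\<^sup>2 * real g) size_W
     * exp (2 * (real i * t * \<gamma> * ln (real g * (real dX)\<^sup>2 / t) / real dX))"
proof (cases "GF = {}")
  case True
  then have "family i = {}" by (auto simp: family_def)
  then show ?thesis using binom_le_factors_nonneg by simp
next
  case False
  then obtain A where "A \<in> GF" by auto
  then have "card F' \<le> g"
    using card_mono[OF finite_NS_GF F'_subset_NS_GF] GF_D(2) by metis
  then show ?thesis by (rule card_family_le_of_card_F'_le)
qed

lemma container_family:
  "let t = real g - real a; w = real g * real dY - real a * real dX in
   \<exists>Fs :: nat \<Rightarrow> ('v set \<times> 'v set) set.
     (\<forall>i\<le>kappa dX.
        Fs i \<subseteq> Pow Y \<times> Pow X \<and>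
        real (card (Fs i)) \<le>
          binom_le (real dY * real g) (\<delta> * \<gamma> * w / ((real dY - \<delta> * \<phi>) * real dX))
          * binom_le (\<delta>^2 * (real dX)^2 * (real dY)^2 * real g) (2 * \<gamma> * w / (real dX * real dY))
          * exp (2 * (real i * t * \<gamma> * ln (real g * (real dX)^2 / t) / real dX)) \<and>
        (\<forall>(F, S)\<in>Fs i.
           (\<exists>A\<in>GsetF X adj \<phi> a g F'.
              approx_pair X Y adj (real dX / (2^i * \<gamma>)) (real dY / \<gamma>) F S A) \<and>
           (i < kappa dX \<longrightarrow> real (card F) < real g - t / 2^i))) \<and>
     (\<forall>A\<in>GsetF X adj \<phi> a g F'. \<exists>i\<le>kappa dX. \<exists>(F, S)\<in>Fs i.
         approx_pair X Y adj (real dX / (2^i * \<gamma>)) (real dY / \<gamma>) F S A)"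
  unfolding Let_def t_def[symmetric] w_def[symmetric] GF_def[symmetric]
    size_T0_def[symmetric] size_W_def[symmetric]
proof (intro exI[of _ family] conjI allI impI ballI)
  fix i
  show "family i \<subseteq> Pow Y \<times> Pow X" by (rule family_subset_Pow)
  show "real (card (family i)) \<le> binom_le (real dY * real g) size_T0
      * binom_le (\<delta>\<^sup>2 * (real dX)\<^sup>2 * (real dY)\<^sup>2 * real g) size_W
      * exp (2 * (real i * t * \<gamma> * ln (real g * (real dX)\<^sup>2 / t) / real dX))"
    by (rule card_family_bound)
next
  fix i p assume "p \<in> family i"
  then show "case p of (F, S) \<Rightarrow>
      (\<exists>A\<in>GF. approx_pair X Y adj (real dX / (2 ^ i * \<gamma>)) (real dY / \<gamma>) F S A) \<and>
      (i < kappa dX \<longrightarrow> real (card F) < real g - t / 2 ^ i)"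
    by (auto simp: family_def split: prod.split)
next
  fix A assume "A \<in> GF"
  then show "\<exists>i\<le>kappa dX. \<exists>(F, S)\<in>family i.
      approx_pair X Y adj (real dX / (2 ^ i * \<gamma>)) (real dY / \<gamma>) F S A"
    using family_covers by (fastforce split: prod.split)
qed

end

theorem lemma2p4:
  "\<exists>\<gamma>0::real. \<forall>\<gamma>\<ge>\<gamma>0. \<forall>\<delta>::real. \<delta> \<ge> 1 \<longrightarrow>
   (\<exists>(C::real) (d0::nat). \<forall>(dX::nat) (dY::nat) (X::'v set) Y adj (a::nat) (g::nat) (\<phi>::real) (F'::'v set).
     d0 \<le> dY \<longrightarrow> dY \<le> dX \<longrightarrow>
     approx_biregular X Y adj \<delta> dX dY \<longrightarrow>
     a < g \<longrightarrow>
     1 \<le> \<phi> \<longrightarrow> \<phi> \<le> real dY / \<delta> - 1 \<longrightarrow>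
     F' \<subseteq> Y \<longrightarrow>
     (let t = real g - real a; w = real g * real dY - real a * real dX in
      \<exists>Fs :: nat \<Rightarrow> ('v set \<times> 'v set) set.
        (\<forall>i\<le>kappa dX.
           Fs i \<subseteq> Pow Y \<times> Pow X \<and>
           real (card (Fs i)) \<le>
             binom_le (real dY * real g) (\<delta> * \<gamma> * w / ((real dY - \<delta> * \<phi>) * real dX))
             * binom_le (\<delta>^2 * (real dX)^2 * (real dY)^2 * real g) (2 * \<gamma> * w / (real dX * real dY))
             * exp (C * (real i * t * \<gamma> * ln (real g * (real dX)^2 / t) / real dX)) \<and>
           (\<forall>(F, S)\<in>Fs i.
              (\<exists>A\<in>GsetF X adj \<phi> a g F'.
                 approx_pair X Y adj (real dX / (2^i * \<gamma>)) (real dY / \<gamma>) F S A) \<and>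
              (i < kappa dX \<longrightarrow> real (card F) < real g - t / 2^i))) \<and>
        (\<forall>A\<in>GsetF X adj \<phi> a g F'. \<exists>i\<le>kappa dX. \<exists>(F, S)\<in>Fs i.
            approx_pair X Y adj (real dX / (2^i * \<gamma>)) (real dY / \<gamma>) F S A)))"
  apply (intro exI[of _ "2::real"] allI impI)
  subgoal for \<gamma> \<delta>
    apply (intro exI[of _ "nat \<lceil>2 * \<gamma>\<rceil>"] allI impI)
    subgoal for dX dY X Y adj a g \<phi> F'
      by (rule container_setting.container_family, unfold_locales) auto
    done
  done

end
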